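(* Let $q\in(0,\tfrac12)$ and let $T\sim U(1,2)$, $S\sim U(-1,0)$ be independent. Let $p_3^{PD}$ be the probability that $$P_{T,S}(x)=(T+S-1)x^3+\big(1-T-2S+q(S-1-T)\big)x^2+\big(S+q(T-S)\big)x$$ has exactly three distinct roots in $[0,1]$. Then $$p_3^{PD}\leq \frac{q}{2(1-q)}.$$ In particular $p_3^{PD}\le \tfrac12$ for all $q\in(0,\tfrac12)$ and $p_3^{PD}\to 0$ as $q\to 0^+$. *)

theory Defs
  imports "HOL-Probability.Probability"
begin

definition P_TS :: "real \<Rightarrow> real \<Rightarrow> real \<Rightarrow> real \<Rightarrow> real" where
  "P_TS qq tt ss x = (tt + ss - 1) * x ^ 3 + (1 - tt - 2 * ss + qq * (ss - 1 - tt)) * x ^ 2 + (ss + qq * (tt - ss)) * x"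

definition TS_law :: "(real \<times> real) measure" where
  "TS_law = uniform_measure lborel {1..2::real} \<Otimes>\<^sub>M uniform_measure lborel {-1..0::real}"

definition p3PD :: "real \<Rightarrow> real" where
  "p3PD q = measure TS_law {(t, s). card {x \<in> {0..1}. P_TS q t s x = 0} = 3}"

end

theory Submission
  imports Defs
begin

text \<open>Since \<open>P_{T,S}(0) = 0\<close> and \<open>P_{T,S}(1) = -q \<noteq> 0\<close>, three roots in \<open>[0,1]\<close> mean that
  \<open>P_{T,S}(x)/x\<close> has two distinct roots \<open>x, y \<in> (0,1)\<close>. Vieta's formulas for this quadratic,
  whose leading coefficient is \<open>a = T + S - 1\<close>, give \<open>q = -a(1-x)(1-y)\<close>, so \<open>a < 0\<close>, and
  \<open>(1-T)(1-q) - qS = -a(x(1-y) + y(1-x)) > 0\<close>. Hence \<open>(T,S)\<close> lies in the triangle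
  \<open>qS < (1-T)(1-q)\<close> of the square \<open>[1,2] \<times> [-1,0]\<close>, whose area is \<open>q/(2(1-q))\<close>.\<close>

lemma quadratic_two_roots_vieta:
  fixes a b c x y :: "'a::idom"
  assumes "a * x^2 + b * x + c = 0" and "a * y^2 + b * y + c = 0" and "x \<noteq> y"
  shows "b = - a * (x + y)" and "c = a * x * y"
proof -
  have "(x - y) * (a * (x + y) + b) = (a * x^2 + b * x + c) - (a * y^2 + b * y + c)"
    by (simp add: algebra_simps power2_eq_square)
  then have "a * (x + y) + b = 0"
    using assms by simp
  then show b: "b = - a * (x + y)"
    by (simp add: add_eq_0_iff2 add.commute)
  show "c = a * x * y"
    using assms(1) unfolding b by (simp add: algebra_simps power2_eq_square)
qed

lemma three_roots_obtain_two_interior: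
  fixes f :: "real \<Rightarrow> real"
  assumes card: "card {x \<in> {0..1}. f x = 0} = 3" and "f 0 = 0" and "f 1 \<noteq> 0"
  obtains x y where "x \<noteq> y" "x \<in> {0<..<1}" "y \<in> {0<..<1}" "f x = 0" "f y = 0"
proof -
  define R where "R = {x \<in> {0..1}. f x = 0}"
  have "finite R"
    using card unfolding R_def by (metis card.infinite zero_neq_numeral)
  moreover have "0 \<in> R"
    using \<open>f 0 = 0\<close> unfolding R_def by simp
  ultimately have "card (R - {0}) = 2"
    using card unfolding R_def by (simp add: card_Diff_singleton)
  then obtain x y where xy: "R - {0} = {x, y}" "x \<noteq> y"
    by (auto simp: card_2_iff)
  have "R - {0} \<subseteq> {z \<in> {0<..<1}. f z = 0}"
    using \<open>f 1 \<noteq> 0\<close> unfolding R_def by (auto simp: less_le)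
  then show thesis
    using that[OF xy(2)] unfolding xy(1) by simp
qed

lemma P_TS_eq:
  "P_TS q t s x = x * ((t + s - 1) * x^2 + (1 - t - 2 * s + q * (s - 1 - t)) * x + (s + q * (t - s)))"
  unfolding P_TS_def by (simp add: algebra_simps power2_eq_square power3_eq_cube)

lemma three_roots_imp_triangle:
  fixes q t s :: real
  assumes "0 < q" and "card {x \<in> {0..1}. P_TS q t s x = 0} = 3"
  shows "q * s < (1 - t) * (1 - q)"
proof -
  define a where "a = t + s - 1"
  define b where "b = 1 - t - 2 * s + q * (s - 1 - t)"
  define c where "c = s + q * (t - s)"
  have "P_TS q t s 0 = 0" "P_TS q t s 1 \<noteq> 0"
    using \<open>0 < q\<close> unfolding P_TS_def by (simp_all add: algebra_simps)
  then obtain x y where "x \<noteq> y" "x \<in> {0<..<1}" "y \<in> {0<..<1}"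
    and "P_TS q t s x = 0" "P_TS q t s y = 0"
    using three_roots_obtain_two_interior assms(2) by metis
  then have x: "0 < x" "x < 1" "a * x^2 + b * x + c = 0"
    and y: "0 < y" "y < 1" "a * y^2 + b * y + c = 0"
    unfolding P_TS_eq a_def b_def c_def by auto
  note vieta = quadratic_two_roots_vieta[OF x(3) y(3) \<open>x \<noteq> y\<close>]
  have "q = - a * ((1 - x) * (1 - y))"
    using vieta unfolding a_def b_def c_def by (simp add: algebra_simps)
  then have "0 < - a * ((1 - x) * (1 - y))"
    using \<open>0 < q\<close> by simp
  moreover have "0 < (1 - x) * (1 - y)"
    using x y by simp
  ultimately have "0 < - a"
    by (rule zero_less_mult_pos2)
  moreover have "0 < x * (1 - y) + y * (1 - x)"
    using x y by (simp add: add_pos_pos)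
  moreover have "(1 - t) * (1 - q) - q * s = - a * (x * (1 - y) + y * (1 - x))"
    using vieta unfolding a_def b_def c_def by (simp add: algebra_simps)
  ultimately show ?thesis
    by (metis diff_gt_0_iff_gt mult_pos_pos)
qed

lemma has_integral_ramp:
  fixes a L :: real
  assumes "0 < L"
  shows "((\<lambda>t. 1 - (t - a) / L) has_integral L / 2) {a..a + L}"
proof -
  define F where "F t = t - (t - a)^2 / (2 * L)" for t
  have "((\<lambda>t. 1 - (t - a) / L) has_integral F (a + L) - F a) {a..a + L}"
  proof (rule fundamental_theorem_of_calculus)
    fix x assume "x \<in> {a..a + L}"
    have "(F has_real_derivative 1 - (x - a) / L) (at x)"
      unfolding F_def using assms by (auto intro!: derivative_eq_intros simp: field_simps)
    then show "(F has_vector_derivative 1 - (x - a) / L) (at x within {a..a + L})"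
      by (simp add: has_real_derivative_iff_has_vector_derivative has_vector_derivative_at_within)
  qed (use assms in simp)
  moreover have "F (a + L) - F a = L / 2"
    unfolding F_def using assms by (simp add: field_simps power2_eq_square)
  ultimately show ?thesis
    by simp
qed

lemma emeasure_uniform_measure_lessThan_le:
  fixes a b k :: real
  assumes "b - a = 1"
  shows "emeasure (uniform_measure lborel {a..b}) {..<k} \<le> ennreal (k - a)"
proof -
  have "emeasure (uniform_measure lborel {a..b}) {..<k} = emeasure lborel ({a..b} \<inter> {..<k})"
    using assms by (subst emeasure_uniform_measure) (auto simp: divide_ennreal_def)
  also have "\<dots> \<le> emeasure lborel {a..k}"
    by (rule emeasure_mono) auto
  also have "\<dots> \<le> ennreal (k - a)"
    by (simp add: emeasure_lborel_Icc_eq)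
  finally show ?thesis .
qed

lemma triangle_sets_TS_law:
  "{p :: real \<times> real. q * snd p < (1 - fst p) * (1 - q)} \<in> sets TS_law"
proof -
  have "{p \<in> space (borel \<Otimes>\<^sub>M borel). q * snd p < (1 - fst p) * (1 - q)} \<in> sets (borel \<Otimes>\<^sub>M borel)"
    by measurable
  moreover have "sets TS_law = sets (borel \<Otimes>\<^sub>M borel)"
    unfolding TS_law_def by (rule sets_pair_measure_cong) auto
  ultimately show ?thesis
    by (simp add: space_pair_measure)
qed

lemma emeasure_triangle_TS_law:
  fixes q :: real
  assumes "0 < q" and "q < 1/2"
  shows "emeasure TS_law {p. q * snd p < (1 - fst p) * (1 - q)} \<le> ennreal (q / (2 * (1 - q)))"
proof -
  define U1 where "U1 = uniform_measure lborel {1..2::real}"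
  define U2 where "U2 = uniform_measure lborel {-1..0::real}"
  define B where "B = {p :: real \<times> real. q * snd p < (1 - fst p) * (1 - q)}"
  define L where "L = q / (1 - q)"
  define ramp where "ramp t = ennreal (1 - (t - 1) / L)" for t
  have L: "0 < L" "L \<le> 1"
    using assms unfolding L_def by (auto simp: field_simps)
  have [measurable]: "ramp \<in> borel_measurable borel"
    unfolding ramp_def by measurable
  interpret U2: prob_space U2
    unfolding U2_def by (rule prob_space_uniform_measure) auto
  have slice: "emeasure U2 (Pair t -` B) \<le> ramp t" for t
  proof -
    have "Pair t -` B = {..< (1 - t) * (1 - q) / q}"
      unfolding B_def using assms by (auto simp: field_simps)
    moreover have "(1 - t) * (1 - q) / q - (-1) = 1 - (t - 1) / L"
      unfolding L_def using assms by (simp add: field_simps)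
    ultimately show ?thesis
      using emeasure_uniform_measure_lessThan_le[of 0 "-1" "(1 - t) * (1 - q) / q"]
      unfolding U2_def ramp_def by simp
  qed
  have ramp_indicator: "ramp t * indicator {1..2} t = ramp t * indicator {1..1 + L} t" for t
  proof (cases "t \<le> 1 + L")
    case False
    then have "ramp t = 0"
      using L unfolding ramp_def by (simp add: field_simps ennreal_eq_0_iff)
    then show ?thesis by simp
  qed (use L in \<open>auto simp: indicator_def\<close>)
  have "emeasure TS_law B = (\<integral>\<^sup>+t. emeasure U2 (Pair t -` B) \<partial>U1)"
    using triangle_sets_TS_law[of q] unfolding TS_law_def U1_def[symmetric] U2_def[symmetric] B_def
    by (intro U2.emeasure_pair_measure_alt) simp
  also have "\<dots> \<le> (\<integral>\<^sup>+t. ramp t \<partial>U1)"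
    by (rule nn_integral_mono) (rule slice)
  also have "\<dots> = (\<integral>\<^sup>+t. ramp t * indicator {1..2} t \<partial>lborel)"
    unfolding U1_def by (subst nn_integral_uniform_measure) (auto simp: divide_ennreal_def)
  also have "\<dots> = (\<integral>\<^sup>+t. ramp t * indicator {1..1 + L} t \<partial>lborel)"
    by (simp only: ramp_indicator)
  also have "\<dots> = ennreal (L / 2)"
    unfolding ramp_def using L
    by (intro nn_integral_has_integral_lebesgue' has_integral_ramp) (auto simp: field_simps)
  also have "L / 2 = q / (2 * (1 - q))"
    unfolding L_def by simp
  finally show ?thesis
    unfolding B_def .
qed

lemma p3PD_le:
  fixes q :: real
  assumes "0 < q" and "q < 1/2"
  shows "p3PD q \<le> q / (2 * (1 - q))"
proof -
  have "{(t, s). card {x \<in> {0..1}. P_TS q t s x = 0} = 3} \<subseteq> {p. q * snd p < (1 - fst p) * (1 - q)}"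
    using three_roots_imp_triangle \<open>0 < q\<close> by auto
  then have "emeasure TS_law {(t, s). card {x \<in> {0..1}. P_TS q t s x = 0} = 3}
      \<le> emeasure TS_law {p. q * snd p < (1 - fst p) * (1 - q)}"
    by (rule emeasure_mono) (rule triangle_sets_TS_law)
  also have "\<dots> \<le> ennreal (q / (2 * (1 - q)))"
    using emeasure_triangle_TS_law[OF assms] .
  finally show ?thesis
    unfolding p3PD_def measure_def by (rule enn2real_leI[rotated]) (use assms in simp)
qed

theorem lemma2p5:
  shows "(\<forall>q::real. 0 < q \<and> q < 1/2 \<longrightarrow> p3PD q \<le> q / (2 * (1 - q)) \<and> p3PD q \<le> 1/2)
         \<and> (p3PD \<longlongrightarrow> 0) (at_right 0)"
proof
  show "\<forall>q::real. 0 < q \<and> q < 1/2 \<longrightarrow> p3PD q \<le> q / (2 * (1 - q)) \<and> p3PD q \<le> 1/2"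
  proof (intro allI impI conjI)
    fix q :: real assume q: "0 < q \<and> q < 1/2"
    then show bound: "p3PD q \<le> q / (2 * (1 - q))"
      using p3PD_le by auto
    have "q / (2 * (1 - q)) \<le> 1/2"
      using q by (simp add: field_simps)
    then show "p3PD q \<le> 1/2"
      using bound by linarith
  qed
  have "\<forall>\<^sub>F q in at_right (0::real). 0 < q \<and> q < 1/2"
    unfolding eventually_at_right_field by (intro exI[of _ "1/2"]) auto
  then have upper: "\<forall>\<^sub>F q in at_right 0. p3PD q \<le> q / (2 * (1 - q))"
    by eventually_elim (use p3PD_le in blast)
  have lower: "\<forall>\<^sub>F q in at_right 0. 0 \<le> p3PD q"
    by (simp add: p3PD_def)
  have "((\<lambda>q::real. q / (2 * (1 - q))) \<longlongrightarrow> 0 / (2 * (1 - 0))) (at_right 0)"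
    by (intro tendsto_intros) auto
  then have "((\<lambda>q::real. q / (2 * (1 - q))) \<longlongrightarrow> 0) (at_right 0)"
    by simp
  then show "(p3PD \<longlongrightarrow> 0) (at_right 0)"
    by (rule tendsto_sandwich[OF lower upper tendsto_const])
qed

end
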